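(* Let $a_1,a_2,k_1,k_2>0$ and $b_1,b_2\ge0$ be constants and consider the batch culture system $$\dot x_1=\left(\frac{a_1s}{k_1+s}-b_1\right)x_1,\quad \dot x_2=\left(\frac{a_2s}{k_2+s}-b_2\right)x_2,\quad \dot s=-\frac{a_1s}{k_1+s}x_1-\frac{a_2s}{k_2+s}x_2,\quad (x_1,x_2,s)\in(0,+\infty)^3,$$ with output $y=s$. For every $r>0$: if this system is not strongly observable in time $r$, then $a_1=a_2$, $b_1=b_2$ and $k_1=k_2$.
   Context: Solutions starting in $(0,+\infty)^3$ exist, are unique and remain in $(0,+\infty)^3$ for all $t\ge0$. The (input-free) system is strongly observable in time $r>0$ if for any two distinct initial states in $(0,+\infty)^3$, the $s$-components $s(t),\bar s(t)$ of the corresponding solutions satisfy $\max_{t\in[0,r]}|s(t)-\bar s(t)|>0$. *)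

theory Defs
  imports "HOL-Analysis.Analysis"
begin

definition batch_solution ::
  "real \<Rightarrow> real \<Rightarrow> real \<Rightarrow> real \<Rightarrow> real \<Rightarrow> real \<Rightarrow>
   (real \<Rightarrow> real) \<Rightarrow> (real \<Rightarrow> real) \<Rightarrow> (real \<Rightarrow> real) \<Rightarrow> bool" where
  "batch_solution a1 a2 k1 k2 b1 b2 x1 x2 s \<longleftrightarrow>
     (\<forall>t\<ge>0. x1 t > 0 \<and> x2 t > 0 \<and> s t > 0 \<and>
        (x1 has_real_derivative ((a1 * s t / (k1 + s t) - b1) * x1 t)) (at t within {0..}) \<and>
        (x2 has_real_derivative ((a2 * s t / (k2 + s t) - b2) * x2 t)) (at t within {0..}) \<and>
        (s has_real_derivative (- (a1 * s t / (k1 + s t)) * x1 t - (a2 * s t / (k2 + s t)) * x2 t))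
           (at t within {0..}))"

text \<open>Strong observability in time r (output y = s): any two solutions with distinct
  initial states in (0,+oo)^3 have s-components that differ somewhere on [0,r]
  (equivalently, max over [0,r] of |s - s'| > 0).\<close>
definition strongly_observable ::
  "real \<Rightarrow> real \<Rightarrow> real \<Rightarrow> real \<Rightarrow> real \<Rightarrow> real \<Rightarrow> real \<Rightarrow> bool" where
  "strongly_observable a1 a2 k1 k2 b1 b2 r \<longleftrightarrow>
     (\<forall>x1 x2 s x1' x2' s'.
        batch_solution a1 a2 k1 k2 b1 b2 x1 x2 s \<longrightarrow>
        batch_solution a1 a2 k1 k2 b1 b2 x1' x2' s' \<longrightarrow>
        (x1 0, x2 0, s 0) \<noteq> (x1' 0, x2' 0, s' 0) \<longrightarrow>
        (\<exists>t\<in>{0..r}. s t \<noteq> s' t))"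

end

theory Submission
  imports Defs "HOL-Computational_Algebra.Polynomial"
begin

text \<open>
  Suppose two distinct initial states produce the same substrate trajectory s on [0,r].
  Along it, each biomass satisfies a linear equation whose coefficient depends on s only,
  so the two solutions have proportional biomasses; comparing their values of s' then
  forces the consumption terms to be proportional,
  a2 s x2 / (k2 + s) = L a1 s x1 / (k1 + s) with L > 0.
  Differentiating this relation gives (k1 - k2) s' = P(s) for an explicit quadratic P.
  Since s is strictly decreasing it takes infinitely many values, so every polynomial
  identity in s holds identically. If k1 = k2 then P = 0, hence a1 = a2 and b1 = b2.
  If k1 \<noteq> k2, differentiating s' = -(1 + L) a1 s x1 / (k1 + s) = P(s) / (k1 - k2) once
  more yields a cubic identity in s, which forces b1 = b2 = 0 and a1 = a2; but then
  s' = a1 s > 0, contradicting the consumption of substrate.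
\<close>

lemma has_real_derivative_unique_on_open:
  fixes f g :: "real \<Rightarrow> real"
  assumes "open U" "t \<in> U" "\<And>u. u \<in> U \<Longrightarrow> f u = g u"
    and "(f has_real_derivative A) (at t)" "(g has_real_derivative B) (at t)"
  shows "A = B"
  using has_field_derivative_transform_within_open[OF assms(4,1,2,3)] assms(5)
  by (rule DERIV_unique)

lemma poly_eq_0_if_vanishes_on_inj_image:
  fixes p :: "'a::idom poly"
  assumes "infinite A" "inj_on f A" "\<And>t. t \<in> A \<Longrightarrow> poly p (f t) = 0"
  shows "p = 0"
proof (rule ccontr)
  assume "p \<noteq> 0"
  then have "finite {z. poly p z = 0}"
    by (rule poly_roots_finite)
  then have "finite (f ` A)"
    by (rule rev_finite_subset) (use assms(3) in auto)
  then show False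
    using assms(1,2) finite_imageD by blast
qed

lemma linear_ode_solutions_proportional:
  fixes x y h :: "real \<Rightarrow> real"
  assumes "a \<le> b" and x_nonzero: "\<And>t. t \<in> {a..b} \<Longrightarrow> x t \<noteq> 0"
    and x': "\<And>t. t \<in> {a..b} \<Longrightarrow> (x has_real_derivative h t * x t) (at t within {a..b})"
    and y': "\<And>t. t \<in> {a..b} \<Longrightarrow> (y has_real_derivative h t * y t) (at t within {a..b})"
    and "t \<in> {a..b}"
  shows "y t = y a / x a * x t"
proof -
  have "\<exists>c. \<forall>t\<in>{a..b}. y t / x t = c"
  proof (rule has_field_derivative_zero_constant)
    fix t assume t: "t \<in> {a..b}"
    have "((\<lambda>t. y t / x t) has_real_derivative
        (h t * y t * x t - y t * (h t * x t)) / (x t * x t)) (at t within {a..b})"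
      using y'[OF t] x'[OF t] x_nonzero[OF t] by (rule DERIV_divide)
    then show "((\<lambda>t. y t / x t) has_real_derivative 0) (at t within {a..b})"
      by (simp add: algebra_simps)
  qed simp
  then obtain c where "\<forall>t\<in>{a..b}. y t / x t = c" by blast
  then have "y t / x t = y a / x a"
    using assms(1,5) by simp
  then show ?thesis
    using x_nonzero[OF assms(5)] by (simp add: field_simps)
qed

locale batch_culture =
  fixes a1 a2 k1 k2 b1 b2 :: real
  assumes a1_pos: "a1 > 0" and a2_pos: "a2 > 0" and k1_pos: "k1 > 0" and k2_pos: "k2 > 0"
begin

abbreviation uptake1 :: "real \<Rightarrow> real" where "uptake1 \<sigma> \<equiv> a1 * \<sigma> / (k1 + \<sigma>)"
abbreviation uptake2 :: "real \<Rightarrow> real" where "uptake2 \<sigma> \<equiv> a2 * \<sigma> / (k2 + \<sigma>)"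

lemma uptake_pos: "\<sigma> > 0 \<Longrightarrow> uptake1 \<sigma> > 0" "\<sigma> > 0 \<Longrightarrow> uptake2 \<sigma> > 0"
  using a1_pos a2_pos k1_pos k2_pos by simp_all

lemma uptake1_has_derivative:
  assumes "\<sigma> > 0"
  shows "(uptake1 has_real_derivative uptake1 \<sigma> * (k1 / (\<sigma> * (k1 + \<sigma>)))) (at \<sigma>)"
proof -
  have "k1 + \<sigma> \<noteq> 0" using assms k1_pos by simp
  then have "(uptake1 has_real_derivative a1 * k1 / (k1 + \<sigma>)^2) (at \<sigma>)"
    by (auto intro!: derivative_eq_intros simp: field_simps power2_eq_square)
  then show ?thesis
    by (rule DERIV_cong) (use assms in \<open>simp add: power2_eq_square\<close>)
qed

text \<open>The quadratic P with (k1 - k2) s' = P(s) once the two uptakes are proportional.\<close>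

definition rate_poly :: "real poly" where
  "rate_poly = [:(b1 - b2) * k1 * k2, (b1 - b2) * (k1 + k2) + a2 * k1 - a1 * k2, b1 - b2 + a2 - a1:]"

lemma poly_rate_poly:
  "poly rate_poly \<sigma> = (b1 - b2) * (k1 + \<sigma>) * (k2 + \<sigma>) + \<sigma> * (a2 * (k1 + \<sigma>) - a1 * (k2 + \<sigma>))"
  by (simp add: rate_poly_def algebra_simps)

lemma poly_rate_poly_uptake:
  assumes "\<sigma> > 0"
  shows "poly rate_poly \<sigma> = (uptake2 \<sigma> - uptake1 \<sigma> + b1 - b2) * ((k1 + \<sigma>) * (k2 + \<sigma>))"
proof -
  have "uptake2 \<sigma> * ((k1 + \<sigma>) * (k2 + \<sigma>)) = a2 * \<sigma> * (k1 + \<sigma>)"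
    "uptake1 \<sigma> * ((k1 + \<sigma>) * (k2 + \<sigma>)) = a1 * \<sigma> * (k2 + \<sigma>)"
    using assms k1_pos k2_pos by simp_all
  then show ?thesis
    unfolding poly_rate_poly by (simp add: algebra_simps)
qed

lemma poly_pderiv_rate_poly:
  "poly (pderiv rate_poly) \<sigma> = (b1 - b2) * (k1 + k2) + a2 * k1 - a1 * k2 + 2 * (b1 - b2 + a2 - a1) * \<sigma>"
  by (simp add: rate_poly_def pderiv_pCons)

end

locale batch_trajectory = batch_culture +
  fixes x1 x2 s :: "real \<Rightarrow> real"
  assumes solution: "batch_solution a1 a2 k1 k2 b1 b2 x1 x2 s"
begin

abbreviation ds :: "real \<Rightarrow> real" where "ds t \<equiv> - uptake1 (s t) * x1 t - uptake2 (s t) * x2 t"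

lemma positive:
  assumes "t \<ge> 0"
  shows "x1 t > 0" "x2 t > 0" "s t > 0"
  using solution[unfolded batch_solution_def, rule_format, OF assms] by simp_all

lemma has_derivative_within:
  assumes "t \<ge> 0"
  shows "(x1 has_real_derivative (uptake1 (s t) - b1) * x1 t) (at t within {0..})"
    and "(x2 has_real_derivative (uptake2 (s t) - b2) * x2 t) (at t within {0..})"
    and "(s has_real_derivative ds t) (at t within {0..})"
  using solution[unfolded batch_solution_def, rule_format, OF assms] by simp_all

lemma has_derivative_at:
  assumes "t > 0"
  shows "(x1 has_real_derivative (uptake1 (s t) - b1) * x1 t) (at t)"
    and "(x2 has_real_derivative (uptake2 (s t) - b2) * x2 t) (at t)"
    and "(s has_real_derivative ds t) (at t)"
proof -
  have "at t within {0..} = at t"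
    by (rule at_within_interior) (use assms in simp)
  then have at: "(f has_real_derivative D) (at t)"
    if "(f has_real_derivative D) (at t within {0..})" for f :: "real \<Rightarrow> real" and D
    using that by simp
  show "(x1 has_real_derivative (uptake1 (s t) - b1) * x1 t) (at t)"
    and "(x2 has_real_derivative (uptake2 (s t) - b2) * x2 t) (at t)"
    and "(s has_real_derivative ds t) (at t)"
    using assms by (intro at has_derivative_within; simp)+
qed

lemma ds_neg:
  assumes "t \<ge> 0"
  shows "ds t < 0"
proof -
  have "uptake1 (s t) * x1 t > 0" "uptake2 (s t) * x2 t > 0"
    using positive[OF assms] uptake_pos[of "s t"] by (simp_all only: mult_pos_pos)
  then show ?thesis by linarith
qed

lemma s_strict_decreasing:
  assumes "0 < u" "u < v"
  shows "s v < s u"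
proof (rule DERIV_neg_imp_decreasing[OF assms(2)])
  fix t assume "u \<le> t"
  with assms(1) have "t > 0" by simp
  then show "\<exists>d. (s has_real_derivative d) (at t) \<and> d < 0"
    using has_derivative_at(3) ds_neg less_imp_le by blast
qed

lemma inj_on_s: "inj_on s {0<..}"
  by (rule inj_onI) (metis greaterThan_iff linorder_neq_iff s_strict_decreasing order_less_irrefl)

lemma proportional_uptake_cross_multiplied:
  assumes proportional: "uptake2 (s u) * x2 u = L * (uptake1 (s u) * x1 u)" and "u > 0"
  shows "a2 * x2 u * (k1 + s u) = L * a1 * (k2 + s u) * x1 u"
proof -
  have "s u > 0" using positive \<open>u > 0\<close> by simp
  moreover have "s u * (a2 * x2 u * (k1 + s u)) = s u * (L * a1 * (k2 + s u) * x1 u)"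
    using proportional \<open>s u > 0\<close> k1_pos k2_pos by (simp add: field_simps)
  ultimately show ?thesis by simp
qed

lemma proportional_uptake_rate_identity:
  assumes "L > 0"
    and proportional: "\<And>u. u \<in> {0<..<r} \<Longrightarrow> uptake2 (s u) * x2 u = L * (uptake1 (s u) * x1 u)"
    and t: "t \<in> {0<..<r}"
  shows "(k1 - k2) * ds t = poly rate_poly (s t)"
proof -
  define F where "F u = a2 * x2 u * (k1 + s u)" for u
  define G where "G u = L * a1 * (k2 + s u) * x1 u" for u
  have F_eq_G: "F u = G u" if "u \<in> {0<..<r}" for u
    unfolding F_def G_def using that by (intro proportional_uptake_cross_multiplied proportional) simp_all
  have "t > 0" using t by simp
  have pos: "x1 t > 0" "x2 t > 0" "s t > 0"
    using positive \<open>t > 0\<close> by simp_all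
  then have "k1 + s t \<noteq> 0" "k2 + s t \<noteq> 0"
    using k1_pos k2_pos by simp_all
  define g1 where "g1 = uptake1 (s t) - b1"
  define g2 where "g2 = uptake2 (s t) - b2"
  define d where "d = ds t"
  have x1': "(x1 has_real_derivative g1 * x1 t) (at t)"
    and x2': "(x2 has_real_derivative g2 * x2 t) (at t)"
    and s': "(s has_real_derivative d) (at t)"
    unfolding g1_def g2_def d_def using \<open>t > 0\<close> by (rule has_derivative_at)+
  have "(F has_real_derivative a2 * (g2 * x2 t * (k1 + s t) + x2 t * d)) (at t)"
    unfolding F_def by (auto intro!: derivative_eq_intros x2' s' simp: algebra_simps)
  then have F': "(F has_real_derivative F t * (g2 + d / (k1 + s t))) (at t)"
    by (rule DERIV_cong) (use \<open>k1 + s t \<noteq> 0\<close> in \<open>simp add: F_def field_simps\<close>)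
  have "(G has_real_derivative L * a1 * (d * x1 t + (k2 + s t) * (g1 * x1 t))) (at t)"
    unfolding G_def by (auto intro!: derivative_eq_intros x1' s' simp: algebra_simps)
  then have G': "(G has_real_derivative G t * (g1 + d / (k2 + s t))) (at t)"
    by (rule DERIV_cong) (use \<open>k2 + s t \<noteq> 0\<close> in \<open>simp add: G_def field_simps\<close>)
  have "F t * (g2 + d / (k1 + s t)) = G t * (g1 + d / (k2 + s t))"
    by (rule has_real_derivative_unique_on_open[OF open_greaterThanLessThan t F_eq_G F' G'])
  moreover have "F t \<noteq> 0"
    unfolding F_def using pos a2_pos k1_pos by simp
  ultimately have "g2 + d / (k1 + s t) = g1 + d / (k2 + s t)"
    using F_eq_G[OF t] by simp
  then have "(k1 - k2) * d = (g2 - g1) * ((k1 + s t) * (k2 + s t))"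
    using \<open>k1 + s t \<noteq> 0\<close> \<open>k2 + s t \<noteq> 0\<close> by (simp add: field_simps)
  also have "\<dots> = poly rate_poly (s t)"
    unfolding g1_def g2_def using poly_rate_poly_uptake pos(3) by simp
  finally show ?thesis
    unfolding d_def .
qed

lemma proportional_uptake_equal_saturation_imp_equal_rates:
  assumes "r > 0" "L > 0"
    and proportional: "\<And>u. u \<in> {0<..<r} \<Longrightarrow> uptake2 (s u) * x2 u = L * (uptake1 (s u) * x1 u)"
    and "k1 = k2"
  shows "a1 = a2 \<and> b1 = b2"
proof -
  have "rate_poly = 0"
  proof (rule poly_eq_0_if_vanishes_on_inj_image)
    show "infinite {0<..<r}" using \<open>r > 0\<close> by simp
    show "inj_on s {0<..<r}" using inj_on_s by (rule inj_on_subset) auto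
    show "poly rate_poly (s t) = 0" if "t \<in> {0<..<r}" for t
      using proportional_uptake_rate_identity[OF \<open>L > 0\<close> proportional that] \<open>k1 = k2\<close> by simp
  qed
  then have "(b1 - b2) * k1 * k2 = 0" "b1 - b2 + a2 - a1 = 0"
    unfolding rate_poly_def by simp_all
  then show ?thesis
    using k1_pos k2_pos by simp
qed

lemma proportional_uptake_cubic_identity:
  assumes "L > 0" "k1 \<noteq> k2"
    and proportional: "\<And>u. u \<in> {0<..<r} \<Longrightarrow> uptake2 (s u) * x2 u = L * (uptake1 (s u) * x1 u)"
    and t: "t \<in> {0<..<r}"
  shows "k1 * poly rate_poly (s t) - s t * (k1 + s t) * poly (pderiv rate_poly) (s t)
    + (k1 - k2) * s t * (a1 * s t - b1 * (k1 + s t)) = 0"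
proof -
  define c where "c = k1 - k2"
  have "c \<noteq> 0" using \<open>k1 \<noteq> k2\<close> unfolding c_def by simp
  \<comment> \<open>Q = -s' is also -P(s)/(k1 - k2), a function of s alone: equate the two derivatives of Q.\<close>
  define Q where "Q u = (1 + L) * (uptake1 (s u) * x1 u)" for u
  have Q_ds: "Q u = - ds u" if "u \<in> {0<..<r}" for u
    unfolding Q_def proportional[OF that]
    by (simp only: ring_distribs mult_1 minus_diff_eq diff_conv_add_uminus mult_minus_left minus_minus)
  have Q_poly: "Q u = - poly rate_poly (s u) / c" if "u \<in> {0<..<r}" for u
    using proportional_uptake_rate_identity[OF \<open>L > 0\<close> proportional that] Q_ds[OF that] \<open>c \<noteq> 0\<close>
    unfolding c_def by (simp add: field_simps)
  have "t > 0" using t by simp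
  define \<sigma> where "\<sigma> = s t"
  define g1 where "g1 = uptake1 \<sigma> - b1"
  define d where "d = ds t"
  define D where "D = \<sigma> * (k1 + \<sigma>)"
  have "\<sigma> > 0" "d < 0"
    unfolding \<sigma>_def d_def using positive ds_neg \<open>t > 0\<close> by simp_all
  then have "D > 0"
    unfolding D_def using k1_pos by simp
  have x1': "(x1 has_real_derivative g1 * x1 t) (at t)"
    and s': "(s has_real_derivative d) (at t)"
    unfolding g1_def d_def \<sigma>_def using \<open>t > 0\<close> by (rule has_derivative_at)+
  define u1 where "u1 = uptake1 \<sigma>"
  have "(Q has_real_derivative (1 + L) * (u1 * (k1 / D) * d * x1 t + g1 * x1 t * u1)) (at t)"
    unfolding Q_def D_def u1_def \<sigma>_def
    by (intro DERIV_cmult DERIV_mult DERIV_chain2[OF uptake1_has_derivative] x1' s' positive)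
      (use \<open>t > 0\<close> in simp)
  then have Q': "(Q has_real_derivative Q t * (k1 * d / D + g1)) (at t)"
    by (rule DERIV_cong)
      (unfold Q_def \<sigma>_def[symmetric] u1_def[symmetric], simp add: algebra_simps add_divide_distrib)
  have P': "((\<lambda>u. - poly rate_poly (s u) / c) has_real_derivative
      - (d * poly (pderiv rate_poly) \<sigma>) / c) (at t)"
    unfolding \<sigma>_def using \<open>c \<noteq> 0\<close> by (auto intro!: derivative_eq_intros s')
  have "Q t * (k1 * d / D + g1) = - (d * poly (pderiv rate_poly) \<sigma>) / c"
    by (rule has_real_derivative_unique_on_open[OF open_greaterThanLessThan t Q_poly Q' P'])
  then have "- d * (k1 * d / D + g1) = - d * (poly (pderiv rate_poly) \<sigma> / c)"
    unfolding Q_ds[OF t] d_def[symmetric] by simp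
  then have "k1 * d / D + g1 = poly (pderiv rate_poly) \<sigma> / c"
    using \<open>d < 0\<close> by (metis mult_cancel_left neg_equal_0_iff_equal order_less_irrefl)
  then have "D * poly (pderiv rate_poly) \<sigma> = k1 * (c * d) + c * (D * g1)"
    using \<open>D > 0\<close> \<open>c \<noteq> 0\<close> by (simp add: field_simps)
  moreover have "c * d = poly rate_poly \<sigma>"
    unfolding d_def \<sigma>_def c_def using proportional_uptake_rate_identity[OF \<open>L > 0\<close> proportional t] .
  moreover have "D * g1 = \<sigma> * (a1 * \<sigma> - b1 * (k1 + \<sigma>))"
    unfolding g1_def D_def using \<open>\<sigma> > 0\<close> k1_pos by (simp add: field_simps)
  ultimately show ?thesis
    unfolding \<sigma>_def[symmetric] c_def[symmetric] D_def[symmetric] by algebra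
qed

lemma proportional_uptake_imp_equal_saturation:
  assumes "r > 0" "L > 0"
    and proportional: "\<And>u. u \<in> {0<..<r} \<Longrightarrow> uptake2 (s u) * x2 u = L * (uptake1 (s u) * x1 u)"
  shows "k1 = k2"
proof (rule ccontr)
  assume "k1 \<noteq> k2"
  define c where "c = k1 - k2"
  define p1 where "p1 = (b1 - b2) * (k1 + k2) + a2 * k1 - a1 * k2"
  define p2 where "p2 = b1 - b2 + a2 - a1"
  have "[:(b1 - b2) * k1 * k1 * k2, - c * b1 * k1, c * a1 - c * b1 - p1 - k1 * p2, - 2 * p2:] = 0"
  proof (rule poly_eq_0_if_vanishes_on_inj_image)
    show "infinite {0<..<r}" using \<open>r > 0\<close> by simp
    show "inj_on s {0<..<r}" using inj_on_s by (rule inj_on_subset) auto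
    fix t assume "t \<in> {0<..<r}"
    from proportional_uptake_cubic_identity[OF \<open>L > 0\<close> \<open>k1 \<noteq> k2\<close> proportional this]
    show "poly [:(b1 - b2) * k1 * k1 * k2, - c * b1 * k1, c * a1 - c * b1 - p1 - k1 * p2, - 2 * p2:] (s t) = 0"
      unfolding c_def p1_def p2_def poly_rate_poly poly_pderiv_rate_poly
      by (simp add: algebra_simps power2_eq_square)
  qed
  then have "(b1 - b2) * k1 * k1 * k2 = 0" "c * b1 * k1 = 0" "p2 = 0"
    by simp_all
  then have "b1 = b2" "b1 = 0" "a1 = a2"
    using k1_pos k2_pos \<open>k1 \<noteq> k2\<close> unfolding c_def p2_def by simp_all
  define t where "t = r / 2"
  have t: "t \<in> {0<..<r}" using \<open>r > 0\<close> unfolding t_def by simp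
  have "(k1 - k2) * ds t = (k1 - k2) * (a1 * s t)"
    using proportional_uptake_rate_identity[OF \<open>L > 0\<close> proportional t]
      \<open>b1 = b2\<close> \<open>b1 = 0\<close> \<open>a1 = a2\<close> unfolding poly_rate_poly by (simp add: algebra_simps)
  then have "ds t = a1 * s t"
    using \<open>k1 \<noteq> k2\<close> by simp
  moreover have "ds t < 0" "a1 * s t > 0"
    using ds_neg positive t a1_pos by simp_all
  ultimately show False
    by linarith
qed

lemma proportional_uptake_imp_equal_params:
  assumes "r > 0" "L > 0"
    and proportional: "\<And>u. u \<in> {0<..<r} \<Longrightarrow> uptake2 (s u) * x2 u = L * (uptake1 (s u) * x1 u)"
  shows "a1 = a2 \<and> b1 = b2 \<and> k1 = k2"
  using proportional_uptake_imp_equal_saturation[OF assms]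
    proportional_uptake_equal_saturation_imp_equal_rates[OF assms] by blast

end

context batch_culture
begin

lemma equal_outputs_proportional_biomass:
  assumes x: "batch_solution a1 a2 k1 k2 b1 b2 x1 x2 s"
    and y: "batch_solution a1 a2 k1 k2 b1 b2 y1 y2 s'"
    and same_output: "\<And>t. t \<in> {0..r} \<Longrightarrow> s t = s' t"
    and t: "t \<in> {0..r}"
  shows "y1 t = y1 0 / x1 0 * x1 t" "y2 t = y2 0 / x2 0 * x2 t"
proof -
  interpret x: batch_trajectory a1 a2 k1 k2 b1 b2 x1 x2 s
    using x by unfold_locales
  interpret y: batch_trajectory a1 a2 k1 k2 b1 b2 y1 y2 s'
    using y by unfold_locales
  have "r \<ge> 0" using t by simp
  show "y1 t = y1 0 / x1 0 * x1 t"
  proof (rule linear_ode_solutions_proportional[OF \<open>r \<ge> 0\<close> _ _ _ t])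
    fix u assume u: "u \<in> {0..r}"
    then show "x1 u \<noteq> 0" using x.positive(1)[of u] by simp
    show "(x1 has_real_derivative (uptake1 (s u) - b1) * x1 u) (at u within {0..r})"
      using u by (intro DERIV_subset[OF x.has_derivative_within(1)]) auto
    show "(y1 has_real_derivative (uptake1 (s u) - b1) * y1 u) (at u within {0..r})"
      using u DERIV_subset[OF y.has_derivative_within(1)] same_output[OF u] by fastforce
  qed
  show "y2 t = y2 0 / x2 0 * x2 t"
  proof (rule linear_ode_solutions_proportional[OF \<open>r \<ge> 0\<close> _ _ _ t])
    fix u assume u: "u \<in> {0..r}"
    then show "x2 u \<noteq> 0" using x.positive(2)[of u] by simp
    show "(x2 has_real_derivative (uptake2 (s u) - b2) * x2 u) (at u within {0..r})"
      using u by (intro DERIV_subset[OF x.has_derivative_within(2)]) auto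
    show "(y2 has_real_derivative (uptake2 (s u) - b2) * y2 u) (at u within {0..r})"
      using u DERIV_subset[OF y.has_derivative_within(2)] same_output[OF u] by fastforce
  qed
qed

lemma equal_outputs_consumption_balance:
  assumes x: "batch_solution a1 a2 k1 k2 b1 b2 x1 x2 s"
    and y: "batch_solution a1 a2 k1 k2 b1 b2 y1 y2 s'"
    and same_output: "\<And>t. t \<in> {0..r} \<Longrightarrow> s t = s' t"
    and u: "u \<in> {0<..<r}"
  shows "(1 - y1 0 / x1 0) * (uptake1 (s u) * x1 u) + (1 - y2 0 / x2 0) * (uptake2 (s u) * x2 u) = 0"
proof -
  interpret x: batch_trajectory a1 a2 k1 k2 b1 b2 x1 x2 s
    using x by unfold_locales
  interpret y: batch_trajectory a1 a2 k1 k2 b1 b2 y1 y2 s'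
    using y by unfold_locales
  have "x.ds u = y.ds u"
  proof (rule has_real_derivative_unique_on_open[OF open_greaterThanLessThan u])
    show "s v = s' v" if "v \<in> {0<..<r}" for v
      using same_output that by simp
    show "(s has_real_derivative x.ds u) (at u)"
      using u by (intro x.has_derivative_at(3)) simp
    show "(s' has_real_derivative y.ds u) (at u)"
      using u by (intro y.has_derivative_at(3)) simp
  qed
  moreover have u': "u \<in> {0..r}"
    using u by simp
  then have "y1 u = y1 0 / x1 0 * x1 u" "y2 u = y2 0 / x2 0 * x2 u" "s' u = s u"
    using same_output[OF u'] equal_outputs_proportional_biomass[where r = r, OF x y same_output u']
    by simp_all
  ultimately show ?thesis
    by (simp add: algebra_simps diff_divide_distrib)
qed

lemma equal_outputs_imp_proportional_uptake:
  assumes x: "batch_solution a1 a2 k1 k2 b1 b2 x1 x2 s"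
    and y: "batch_solution a1 a2 k1 k2 b1 b2 y1 y2 s'"
    and "r > 0" and same_output: "\<And>t. t \<in> {0..r} \<Longrightarrow> s t = s' t"
    and distinct: "(x1 0, x2 0, s 0) \<noteq> (y1 0, y2 0, s' 0)"
  obtains L where "L > 0"
    "\<And>u. u \<in> {0<..<r} \<Longrightarrow> uptake2 (s u) * x2 u = L * (uptake1 (s u) * x1 u)"
proof -
  interpret x: batch_trajectory a1 a2 k1 k2 b1 b2 x1 x2 s
    using x by unfold_locales
  define C1 where "C1 = y1 0 / x1 0"
  define C2 where "C2 = y2 0 / x2 0"
  have balance: "(1 - C1) * (uptake1 (s u) * x1 u) + (1 - C2) * (uptake2 (s u) * x2 u) = 0"
    if "u \<in> {0<..<r}" for u
    unfolding C1_def C2_def using x y same_output that by (rule equal_outputs_consumption_balance)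
  define t0 where "t0 = r / 2"
  have t0: "t0 \<in> {0<..<r}" using \<open>r > 0\<close> unfolding t0_def by simp
  have A: "uptake1 (s t0) * x1 t0 > 0" and B: "uptake2 (s t0) * x2 t0 > 0"
    using t0 by (intro mult_pos_pos uptake_pos x.positive; simp)+
  have "\<not> (C1 = 1 \<and> C2 = 1)"
  proof
    assume "C1 = 1 \<and> C2 = 1"
    then have "y1 0 = x1 0" "y2 0 = x2 0"
      unfolding C1_def C2_def using x.positive[of 0] by simp_all
    moreover have "s' 0 = s 0" using same_output[of 0] \<open>r > 0\<close> by simp
    ultimately show False using distinct by simp
  qed
  then have "C2 \<noteq> 1"
    using balance[OF t0] A by auto
  define L where "L = (C1 - 1) / (1 - C2)"
  have solve: "B = L * A" if "(1 - C1) * A + (1 - C2) * B = 0" for A B :: real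
    using that \<open>C2 \<noteq> 1\<close> unfolding L_def by (simp add: field_simps)
  have proportional: "uptake2 (s u) * x2 u = L * (uptake1 (s u) * x1 u)" if "u \<in> {0<..<r}" for u
    by (rule solve[OF balance[OF that]])
  have "0 < L * (uptake1 (s t0) * x1 t0)"
    using B unfolding proportional[OF t0] .
  then have "L > 0"
    using A by (rule zero_less_mult_pos2)
  then show ?thesis
    using proportional that by blast
qed

end

theorem theorem3p5:
  fixes a1 a2 k1 k2 b1 b2 r :: real
  assumes "a1 > 0" "a2 > 0" "k1 > 0" "k2 > 0" "b1 \<ge> 0" "b2 \<ge> 0" "r > 0"
    and "\<not> strongly_observable a1 a2 k1 k2 b1 b2 r"
  shows "a1 = a2 \<and> b1 = b2 \<and> k1 = k2"
proof -
  interpret batch_culture a1 a2 k1 k2 b1 b2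
    using assms(1-4) by unfold_locales
  obtain x1 x2 s y1 y2 s' where
    x: "batch_solution a1 a2 k1 k2 b1 b2 x1 x2 s" and
    y: "batch_solution a1 a2 k1 k2 b1 b2 y1 y2 s'" and
    distinct: "(x1 0, x2 0, s 0) \<noteq> (y1 0, y2 0, s' 0)" and
    same_output: "\<And>t. t \<in> {0..r} \<Longrightarrow> s t = s' t"
    using assms(8) unfolding strongly_observable_def by blast
  obtain L where "L > 0"
    "\<And>u. u \<in> {0<..<r} \<Longrightarrow> uptake2 (s u) * x2 u = L * (uptake1 (s u) * x1 u)"
    using equal_outputs_imp_proportional_uptake[OF x y \<open>r > 0\<close> same_output distinct] by blast
  interpret batch_trajectory a1 a2 k1 k2 b1 b2 x1 x2 s
    using x by unfold_locales
  show ?thesis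
    by (rule proportional_uptake_imp_equal_params) fact+
qed

end
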